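(* Let $k\ge 0$, let $\Omega$ be any collection of functions, and let $\varphi$ be an expression of $\mathsf{TL}(\Omega)$ of treewidth at most $k$ whose free variables are among $x_1,\dots,x_{k+1}$. Then there is an expression $\varphi'\in\mathsf{TL}_{k+1}(\Omega)$ with $\mathrm{free}(\varphi')\subseteq\mathrm{free}(\varphi)$... more precisely with $[\![\varphi']\!]^\nu_G=[\![\varphi]\!]^\nu_G$ for every graph $G$ and every valuation $\nu$.
   Context: Fix integers $n\ge 1$ and $\ell\ge 1$. A graph is a triple $G=(V_G,E_G,\mathrm{col}_G)$ with $V_G=[n]$, $E_G$ a set of unordered pairs of distinct vertices, and $\mathrm{col}_G:V_G\to\mathbb R^\ell$. Tensor language $\mathsf{TL}(\Omega)$: $\Omega$ is a collection of functions $f:\mathbb R^p\to\mathbb R$ ($p\ge1$ depending on $f$). Expressions: $\varphi::=\mathbf 1_{x=y}\mid \mathbf 1_{x\neq y}\mid E(x,y)\mid P_s(x)\mid \varphi\cdot\varphi\mid \varphi+\varphi\mid a\cdot\varphi\mid f(\varphi_1,\dots,\varphi_p)\mid \sum_x\varphi$ ($s\in[\ell]$, $a\in\mathbb R$, $f\in\Omega$), with the usual free variables ($\sum_x$ binds $x$). Semantics for a graph $G$ and valuation $\nu$ into $V_G$: $[\![E(x,y)]\!]^\nu_G=1$ if $\nu(x)\nu(y)\in E_G$ else $0$; $[\![P_s(x)]\!]^\nu_G=\mathrm{col}_G(\nu(x))_s$; $[\![\mathbf 1_{x\,\mathrm{op}\,y}]\!]^\nu_G=1$ if $\nu(x)\,\mathrm{op}\,\nu(y)$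 else $0$; $\cdot,+,a\cdot,f$ act on values; $[\![\sum_x\varphi]\!]^\nu_G=\sum_{v\in V_G}[\![\varphi]\!]^{\nu[x\mapsto v]}_G$. $\mathsf{TL}_{k+1}(\Omega)$ is the set of expressions in which only variables from $\{x_1,\dots,x_{k+1}\}$ occur (free or bound; re-binding allowed). Conjunctive expressions and their treewidth. Allow, besides the atoms above, additional relation symbols $R$ of some arity $r$ (atoms $R(z_1,\dots,z_r)$, interpreted by arbitrary real-valued functions on $V_G^r$). A conjunctive expression is $\psi(\mathbf x)=\sum_{y_1}\cdots\sum_{y_p}\theta$, where $y_1,\dots,y_p$ are distinct variables not among the free variables $\mathbf x=(x_{i_1},\dots,x_{i_f})$, and $\theta$ is a product of atoms of the forms $E(z,z')$, $P_s(z)$, $\mathbf 1_{z=z'}$, $\mathbf 1_{z\ne z'}$, $R(z_1,\dots,z_r)$ with variables from $\mathbf x\cup\{y_1,\dots,y_p\}$. Its hypergraph $\mathcal H_\psi$ has vertex set $\mathbf x\cup\{y_1,\dots,y_p\}$, a multiset of hyperedges containing, for each atom, the set of variables occurring in it, and distinguished vertices $\mathbf x$. An elimination sequence is an ordering $v_1,\dots,v_N$ of the vertices with the $f$ distinguished ones first ($v_1,\dots,v_f$). Let $\mathcal E_N$ be the hyperedge multiset and, for $j=N,N-1,\dots,f+1$: $\partial(v_j)=\{F\in\mathcal E_j:v_j\in F\}$, $U_j=\bigcup_{F\in\partial(v_j)}F$, $\mathcal E_{j-1}=(\mathcal E_j\setminus\partial(v_j))\cup\{U_j\setminus\{v_j\}\}$.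 The induced width of the sequence is $f+\max_{f+1\le i\le N}|U_i\setminus\{v_1,\dots,v_f\}|-1$ (and $f-1$ if $N=f$). The treewidth of $\psi$ is the minimum induced width over its elimination sequences. Treewidth of arbitrary expressions (recursive on nesting of function applications): $\varphi\in\mathsf{TL}(\Omega)$ has treewidth at most $k$ if (a) the expression $\varphi_{\mathrm{nofun}}$, obtained from $\varphi$ by replacing each maximal subexpression of the form $f(\varphi_1,\dots,\varphi_p)$ by an atom $R_f(\mathbf z)$ with a fresh relation symbol, where $\mathbf z$ lists $\mathrm{free}(\varphi_1)\cup\dots\cup\mathrm{free}(\varphi_p)$, is equivalent (same value for all graphs, all interpretations of the fresh symbols and all valuations) to a finite linear combination $\sum_\alpha a_\alpha\psi_\alpha$, $a_\alpha\in\mathbb R$, of conjunctive expressions $\psi_\alpha$ each of treewidth at most $k$; and (b) every $\varphi_i$ occurring as an argument of such a maximal function application has treewidth at most $k$. *)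

theory Defs
  imports Complex_Main "HOL-Library.Multiset"
begin

text \<open>Variables are natural numbers; variable i stands for x_i.
  Vertices of a graph are {1..n}; colour channels are {1..l}.
  A function symbol of Omega is a pair (p, f) with arity p and f acting on
  argument lists of length p.  The constructor Rel r zs is an atom R(z_1,...,z_r)
  for an additional relation symbol r (only used in conjunctive expressions and
  in the nofun transformation; expressions of TL(Omega) contain no Rel).\<close>

datatype 'r expr =
    EqA nat nat
  | NeqA nat nat
  | Edge nat nat
  | Col nat nat            (* Col x s  =  P_s(x) *)
  | Mul "'r expr" "'r expr"
  | Add "'r expr" "'r expr"
  | Scale real "'r expr"
  | App "nat \<times> (real list \<Rightarrow> real)" "'r expr list"
  | Sum nat "'r expr"
  | Rel 'r "nat list"

primrec free :: "'r expr \<Rightarrow> nat set" where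
  "free (EqA x y) = {x, y}"
| "free (NeqA x y) = {x, y}"
| "free (Edge x y) = {x, y}"
| "free (Col x s) = {x}"
| "free (Mul a b) = free a \<union> free b"
| "free (Add a b) = free a \<union> free b"
| "free (Scale c a) = free a"
| "free (App f as) = \<Union> (set (map free as))"
| "free (Sum x a) = free a - {x}"
| "free (Rel r zs) = set zs"

primrec vars :: "'r expr \<Rightarrow> nat set" where
  "vars (EqA x y) = {x, y}"
| "vars (NeqA x y) = {x, y}"
| "vars (Edge x y) = {x, y}"
| "vars (Col x s) = {x}"
| "vars (Mul a b) = vars a \<union> vars b"
| "vars (Add a b) = vars a \<union> vars b"
| "vars (Scale c a) = vars a"
| "vars (App f as) = \<Union> (set (map vars as))"
| "vars (Sum x a) = insert x (vars a)"
| "vars (Rel r zs) = set zs"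

text \<open>A graph on vertex set {1..n}: edge relation E and colouring col
  (col v s is the s-th component of the colour of v).\<close>
type_synonym graph = "(nat \<Rightarrow> nat \<Rightarrow> bool) \<times> (nat \<Rightarrow> nat \<Rightarrow> real)"

definition is_graph :: "nat \<Rightarrow> graph \<Rightarrow> bool" where
  "is_graph n G \<longleftrightarrow>
     (\<forall>u\<in>{1..n}. \<forall>v\<in>{1..n}. fst G u v = fst G v u) \<and> (\<forall>v\<in>{1..n}. \<not> fst G v v)"

definition valuation :: "nat \<Rightarrow> (nat \<Rightarrow> nat) \<Rightarrow> bool" where
  "valuation n \<nu> \<longleftrightarrow> (\<forall>x. \<nu> x \<in> {1..n})"

primrec eval :: "nat \<Rightarrow> graph \<Rightarrow> ('r \<Rightarrow> nat list \<Rightarrow> real) \<Rightarrow> (nat \<Rightarrow> nat) \<Rightarrow> 'r expr \<Rightarrow> real" where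
  "eval n G I \<nu> (EqA x y) = (if \<nu> x = \<nu> y then 1 else 0)"
| "eval n G I \<nu> (NeqA x y) = (if \<nu> x \<noteq> \<nu> y then 1 else 0)"
| "eval n G I \<nu> (Edge x y) = (if fst G (\<nu> x) (\<nu> y) then 1 else 0)"
| "eval n G I \<nu> (Col x s) = snd G (\<nu> x) s"
| "eval n G I \<nu> (Mul a b) = eval n G I \<nu> a * eval n G I \<nu> b"
| "eval n G I \<nu> (Add a b) = eval n G I \<nu> a + eval n G I \<nu> b"
| "eval n G I \<nu> (Scale c a) = c * eval n G I \<nu> a"
| "eval n G I \<nu> (App f as) = snd f (map (eval n G I \<nu>) as)"
| "eval n G I \<nu> (Sum x a) = (\<Sum>v\<in>{1..n}. eval n G I (\<nu>(x := v)) a)"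
| "eval n G I \<nu> (Rel r zs) = I r (map \<nu> zs)"

primrec tl_over :: "(nat \<times> (real list \<Rightarrow> real)) set \<Rightarrow> nat \<Rightarrow> 'r expr \<Rightarrow> bool" where
  "tl_over \<Omega> l (EqA x y) = True"
| "tl_over \<Omega> l (NeqA x y) = True"
| "tl_over \<Omega> l (Edge x y) = True"
| "tl_over \<Omega> l (Col x s) = (1 \<le> s \<and> s \<le> l)"
| "tl_over \<Omega> l (Mul a b) = (tl_over \<Omega> l a \<and> tl_over \<Omega> l b)"
| "tl_over \<Omega> l (Add a b) = (tl_over \<Omega> l a \<and> tl_over \<Omega> l b)"
| "tl_over \<Omega> l (Scale c a) = tl_over \<Omega> l a"
| "tl_over \<Omega> l (App f as) = (f \<in> \<Omega> \<and> length as = fst f \<and> list_all (tl_over \<Omega> l) as)"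
| "tl_over \<Omega> l (Sum x a) = tl_over \<Omega> l a"
| "tl_over \<Omega> l (Rel r zs) = False"

primrec is_prod :: "nat \<Rightarrow> 'r expr \<Rightarrow> bool" where
  "is_prod l (EqA x y) = True"
| "is_prod l (NeqA x y) = True"
| "is_prod l (Edge x y) = True"
| "is_prod l (Col x s) = (1 \<le> s \<and> s \<le> l)"
| "is_prod l (Mul a b) = (is_prod l a \<and> is_prod l b)"
| "is_prod l (Add a b) = False"
| "is_prod l (Scale c a) = False"
| "is_prod l (App f as) = False"
| "is_prod l (Sum x a) = False"
| "is_prod l (Rel r zs) = True"

primrec atoms_of :: "'r expr \<Rightarrow> 'r expr list" where
  "atoms_of (EqA x y) = [EqA x y]"
| "atoms_of (NeqA x y) = [NeqA x y]"
| "atoms_of (Edge x y) = [Edge x y]"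
| "atoms_of (Col x s) = [Col x s]"
| "atoms_of (Mul a b) = atoms_of a @ atoms_of b"
| "atoms_of (Add a b) = [Add a b]"
| "atoms_of (Scale c a) = [Scale c a]"
| "atoms_of (App f as) = [App f as]"
| "atoms_of (Sum x a) = [Sum x a]"
| "atoms_of (Rel r zs) = [Rel r zs]"

definition sumvars :: "nat list \<Rightarrow> 'r expr \<Rightarrow> 'r expr" where
  "sumvars ys \<theta> = foldr Sum ys \<theta>"

definition is_conj :: "nat \<Rightarrow> nat list \<Rightarrow> 'r expr \<Rightarrow> bool" where
  "is_conj l ys \<theta> \<longleftrightarrow> distinct ys \<and> is_prod l \<theta>"

text \<open>Hyperedge multiset: one hyperedge (its variable set) per atom.\<close>
definition hedges :: "'r expr \<Rightarrow> nat set multiset" where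
  "hedges \<theta> = mset (map vars (atoms_of \<theta>))"

text \<open>Eliminate vertices in the given order (v_N first), returning the
  list of the numbers |U_j - X|.\<close>
fun elim :: "nat set \<Rightarrow> nat set multiset \<Rightarrow> nat list \<Rightarrow> nat list" where
  "elim X E [] = []"
| "elim X E (v # vs) =
     (let D = filter_mset (\<lambda>F. v \<in> F) E; U = \<Union> (set_mset D)
      in card (U - X) # elim X ((E - D) + {# U - {v} #}) vs)"

text \<open>Elimination sequences v_1..v_N: all vertices, distinguished ones first.\<close>
definition elim_seq :: "nat set \<Rightarrow> nat set \<Rightarrow> nat list \<Rightarrow> bool" where
  "elim_seq X Y \<sigma> \<longleftrightarrow> distinct \<sigma> \<and> set \<sigma> = X \<union> Y \<and> set (take (card X) \<sigma>) = X"

definition induced_width :: "nat set \<Rightarrow> nat set multiset \<Rightarrow> nat list \<Rightarrow> int" where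
  "induced_width X E \<sigma> =
     (let ws = elim X E (rev (drop (card X) \<sigma>))
      in if ws = [] then int (card X) - 1 else int (card X) + int (Max (set ws)) - 1)"

definition conj_tw :: "nat list \<Rightarrow> 'r expr \<Rightarrow> int" where
  "conj_tw ys \<theta> =
     Min {induced_width (free (sumvars ys \<theta>)) (hedges \<theta>) \<sigma> | \<sigma>.
            elim_seq (free (sumvars ys \<theta>)) (set ys) \<sigma>}"

text \<open>Replace each maximal function application by a fresh relation atom;
  the fresh symbol is the (reversed) position of the subexpression, so
  different occurrences get different symbols.\<close>
primrec nofun :: "nat list \<Rightarrow> 'r expr \<Rightarrow> nat list expr" where
  "nofun p (EqA x y) = EqA x y"
| "nofun p (NeqA x y) = NeqA x y"
| "nofun p (Edge x y) = Edge x y"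
| "nofun p (Col x s) = Col x s"
| "nofun p (Mul a b) = Mul (nofun (0 # p) a) (nofun (1 # p) b)"
| "nofun p (Add a b) = Add (nofun (0 # p) a) (nofun (1 # p) b)"
| "nofun p (Scale c a) = Scale c (nofun (0 # p) a)"
| "nofun p (App f as) = Rel (rev p) (sorted_list_of_set (\<Union> (set (map free as))))"
| "nofun p (Sum x a) = Sum x (nofun (0 # p) a)"
| "nofun p (Rel r zs) = Rel (rev p) zs"

primrec maxargs :: "'r expr \<Rightarrow> 'r expr list" where
  "maxargs (EqA x y) = []"
| "maxargs (NeqA x y) = []"
| "maxargs (Edge x y) = []"
| "maxargs (Col x s) = []"
| "maxargs (Mul a b) = maxargs a @ maxargs b"
| "maxargs (Add a b) = maxargs a @ maxargs b"
| "maxargs (Scale c a) = maxargs a"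
| "maxargs (App f as) = as"
| "maxargs (Sum x a) = maxargs a"
| "maxargs (Rel r zs) = []"

definition cond_a :: "nat \<Rightarrow> nat \<Rightarrow> nat \<Rightarrow> nat list expr \<Rightarrow> bool" where
  "cond_a n l k \<phi> \<longleftrightarrow>
     (\<exists>cs :: (real \<times> nat list \<times> nat list expr) list.
        (\<forall>(a, ys, \<theta>) \<in> set cs. is_conj l ys \<theta> \<and> conj_tw ys \<theta> \<le> int k) \<and>
        (\<forall>G I \<nu>. is_graph n G \<longrightarrow> valuation n \<nu> \<longrightarrow>
            eval n G I \<nu> (nofun [] \<phi>) =
            (\<Sum>(a, ys, \<theta>) \<leftarrow> cs. a * eval n G I \<nu> (sumvars ys \<theta>))))"

inductive tw_le :: "nat \<Rightarrow> nat \<Rightarrow> nat \<Rightarrow> nat list expr \<Rightarrow> bool" for n l k where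
  "cond_a n l k \<phi> \<Longrightarrow> (\<forall>\<psi> \<in> set (maxargs \<phi>). tw_le n l k \<psi>) \<Longrightarrow> tw_le n l k \<phi>"

end

theory Submission
  imports Defs
begin

text \<open>The translation is constructed by induction along tw_le, modulo a renaming
  \<rho> of all variables into x_1..x_{k+1}: for every such \<rho> we build a TL_{k+1} expression
  computing \<phi> at \<nu> \<circ> \<rho>.  By condition (a), nofun \<phi> is a linear combination of conjunctive
  expressions of treewidth at most k, and each of them is evaluated by variable elimination
  along an optimal elimination sequence: eliminating a variable multiplies the factors
  containing it and sums it out.  The new factor depends on at most k variables, so one of
  the k+1 variable names is unused and can serve as the summation variable.  An atom R_f is
  replaced by the application f itself, whose arguments are translated by the induction
  hypothesis under a suitable renaming.  Taking \<rho> to be the identity on x_1..x_{k+1} gives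
  an equivalent expression; its free variables outside free \<phi> are removed by averaging.\<close>

lemma finite_free [simp]: "finite (free e)"
  by (induction e) auto

lemma finite_vars [simp]: "finite (vars e)"
  by (induction e) auto

lemma free_subset_vars: "free e \<subseteq> vars e"
  by (induction e) auto

lemma free_sumvars: "free (sumvars ys \<theta>) = free \<theta> - set ys"
  by (induction ys) (auto simp: sumvars_def)

lemma eval_cong_free:
  "\<forall>z\<in>free e. \<nu> z = \<nu>' z \<Longrightarrow> eval n G I \<nu> e = eval n G I \<nu>' e"
proof (induction e arbitrary: \<nu> \<nu>')
  case (App f as)
  then have "map (eval n G I \<nu>) as = map (eval n G I \<nu>') as"
    by (auto intro!: map_cong)
  then show ?case by (simp only: eval.simps)
next
  case (Sum x a)
  then show ?case by (auto intro!: sum.cong)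
next
  case (Rel r zs)
  then show ?case by (simp cong: map_cong)
next
  case (Mul a b)
  then have "eval n G I \<nu> a = eval n G I \<nu>' a" "eval n G I \<nu> b = eval n G I \<nu>' b" by auto
  then show ?case by simp
next
  case (Add a b)
  then have "eval n G I \<nu> a = eval n G I \<nu>' a" "eval n G I \<nu> b = eval n G I \<nu>' b" by auto
  then show ?case by simp
qed simp_all

lemma eval_tl_over_interp_indep: "tl_over \<Omega> l e \<Longrightarrow> eval n G I \<nu> e = eval n G I' \<nu> e"
proof (induction e arbitrary: \<nu>)
  case (App f as)
  then have "map (eval n G I \<nu>) as = map (eval n G I' \<nu>) as"
    by (auto intro!: map_cong simp: list_all_iff)
  then show ?case by (simp only: eval.simps)
qed auto

primrec iter_sum :: "nat \<Rightarrow> (nat \<Rightarrow> nat) \<Rightarrow> nat list \<Rightarrow> ((nat \<Rightarrow> nat) \<Rightarrow> real) \<Rightarrow> real" where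
  "iter_sum n \<beta> [] h = h \<beta>"
| "iter_sum n \<beta> (y # ys) h = (\<Sum>u\<in>{1..n}. iter_sum n (\<beta>(y := u)) ys h)"

lemma eval_sumvars: "eval n G I \<nu> (sumvars ys \<theta>) = iter_sum n \<nu> ys (\<lambda>\<beta>. eval n G I \<beta> \<theta>)"
  by (induction ys arbitrary: \<nu>) (auto simp: sumvars_def)

lemma iter_sum_append: "iter_sum n \<beta> (xs @ ys) h = iter_sum n \<beta> xs (\<lambda>\<beta>'. iter_sum n \<beta>' ys h)"
  by (induction xs arbitrary: \<beta>) auto

lemma iter_sum_swap: "iter_sum n \<beta> (y # x # zs) h = iter_sum n \<beta> (x # y # zs) h"
proof (cases "x = y")
  case False
  then show ?thesis
    by (simp only: iter_sum.simps, subst sum.swap) (simp add: fun_upd_twist)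
qed simp

lemma iter_sum_move_to_front: "iter_sum n \<beta> (ys @ x # zs) h = iter_sum n \<beta> (x # ys @ zs) h"
proof (induction ys arbitrary: \<beta>)
  case (Cons y ys)
  then have "iter_sum n \<beta> ((y # ys) @ x # zs) h = iter_sum n \<beta> (y # x # ys @ zs) h"
    by simp
  also have "\<dots> = iter_sum n \<beta> (x # (y # ys) @ zs) h"
    by (simp only: iter_sum_swap append_Cons)
  finally show ?case .
qed simp

lemma iter_sum_perm: "mset xs = mset ys \<Longrightarrow> iter_sum n \<beta> xs h = iter_sum n \<beta> ys h"
proof (induction xs arbitrary: ys \<beta>)
  case (Cons x xs)
  then obtain as bs where ys: "ys = as @ x # bs"
    by (metis list.set_intros(1) set_mset_mset split_list)
  with Cons.prems have "mset xs = mset (as @ bs)" by simp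
  with Cons.IH have "\<And>\<beta>. iter_sum n \<beta> xs h = iter_sum n \<beta> (as @ bs) h" by blast
  then show ?case unfolding ys iter_sum_move_to_front by simp
qed simp

fun prod_expr :: "'r expr list \<Rightarrow> 'r expr" where
  "prod_expr [] = EqA 1 1"
| "prod_expr (e # es) = Mul e (prod_expr es)"

lemma eval_prod_expr: "eval n G I \<nu> (prod_expr es) = (\<Prod>e\<leftarrow>es. eval n G I \<nu> e)"
  by (induction es) auto

lemma tl_over_prod_expr: "(\<And>e. e \<in> set es \<Longrightarrow> tl_over \<Omega> l e) \<Longrightarrow> tl_over \<Omega> l (prod_expr es)"
  by (induction es) auto

lemma vars_prod_expr: "vars (prod_expr es) \<subseteq> insert 1 (\<Union>(vars ` set es))"
  by (induction es) auto

abbreviation zero_expr :: "'r expr" where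
  "zero_expr \<equiv> Scale 0 (EqA 1 1)"

fun lincomb_expr :: "(real \<times> 'r expr) list \<Rightarrow> 'r expr" where
  "lincomb_expr [] = zero_expr"
| "lincomb_expr ((a, e) # ps) = Add (Scale a e) (lincomb_expr ps)"

lemma eval_lincomb_expr: "eval n G I \<nu> (lincomb_expr ps) = (\<Sum>(a, e)\<leftarrow>ps. a * eval n G I \<nu> e)"
  by (induction ps rule: lincomb_expr.induct) auto

lemma tl_over_lincomb_expr:
  "(\<And>a e. (a, e) \<in> set ps \<Longrightarrow> tl_over \<Omega> l e) \<Longrightarrow> tl_over \<Omega> l (lincomb_expr ps)"
  by (induction ps rule: lincomb_expr.induct) auto

lemma vars_lincomb_expr: "vars (lincomb_expr ps) \<subseteq> insert 1 (\<Union>(a, e)\<in>set ps. vars e)"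
  by (induction ps rule: lincomb_expr.induct) auto

text \<open>(1/n) \<Sigma>_t e = e if e does not depend on t: this removes free variables
  without introducing new variable names.\<close>
definition average_out :: "nat \<Rightarrow> nat list \<Rightarrow> 'r expr \<Rightarrow> 'r expr" where
  "average_out n ts e = foldr (\<lambda>t e. Scale (1 / real n) (Sum t e)) ts e"

lemma tl_over_average_out: "tl_over \<Omega> l (average_out n ts e) = tl_over \<Omega> l e"
  by (induction ts) (auto simp: average_out_def)

lemma vars_average_out: "vars (average_out n ts e) \<subseteq> set ts \<union> vars e"
  by (induction ts) (auto simp: average_out_def)

lemma free_average_out: "free (average_out n ts e) = free e - set ts"
  by (induction ts) (auto simp: average_out_def)

lemma eval_average_out:
  assumes "n \<ge> 1" and "valuation n \<nu>" and "set ts \<inter> T = {}"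
    and indep: "\<And>\<mu> \<mu>'. valuation n \<mu> \<Longrightarrow> valuation n \<mu>' \<Longrightarrow> (\<forall>z\<in>T. \<mu> z = \<mu>' z) \<Longrightarrow>
       eval n G I \<mu> e = eval n G I \<mu>' e"
  shows "eval n G I \<nu> (average_out n ts e) = eval n G I \<nu> e"
  using assms(2,3)
proof (induction ts arbitrary: \<nu>)
  case (Cons t ts)
  have "eval n G I (\<nu>(t := u)) (average_out n ts e) = eval n G I \<nu> e" if "u \<in> {1..n}" for u
  proof -
    have \<nu>u: "valuation n (\<nu>(t := u))" using Cons.prems(1) that by (auto simp: valuation_def)
    then have "eval n G I (\<nu>(t := u)) (average_out n ts e) = eval n G I (\<nu>(t := u)) e"
      using Cons by auto
    also have "\<dots> = eval n G I \<nu> e"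
      using indep[OF \<nu>u Cons.prems(1)] Cons.prems(2) by auto
    finally show ?thesis .
  qed
  then show ?case using \<open>n \<ge> 1\<close> by (simp add: average_out_def)
qed (simp add: average_out_def)

lemma eval_prod_atoms: "is_prod l \<theta> \<Longrightarrow> eval n G I \<beta> \<theta> = (\<Prod>a\<leftarrow>atoms_of \<theta>. eval n G I \<beta> a)"
  by (induction \<theta>) auto

lemma atoms_of_prod_cases:
  assumes "is_prod l \<theta>" and "a \<in> set (atoms_of \<theta>)"
  obtains x y where "a = EqA x y" | x y where "a = NeqA x y" | x y where "a = Edge x y"
    | x s where "a = Col x s" "1 \<le> s" "s \<le> l" | p zs where "a = Rel p zs"
  using assms by (induction \<theta>) auto

lemma conj_tw_le_obtains:
  assumes "distinct ys" and "conj_tw ys \<theta> \<le> int k"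
  obtains \<sigma> where "elim_seq (free (sumvars ys \<theta>)) (set ys) \<sigma>"
    and "induced_width (free (sumvars ys \<theta>)) (hedges \<theta>) \<sigma> \<le> int k"
proof -
  define X where "X = free (sumvars ys \<theta>)"
  define S where "S = {\<sigma>. elim_seq X (set ys) \<sigma>}"
  have "S \<subseteq> {xs. set xs \<subseteq> X \<union> set ys \<and> length xs \<le> card (X \<union> set ys)}"
    by (auto simp: S_def elim_seq_def distinct_card[symmetric])
  then have "finite S"
    by (rule finite_subset) (intro finite_lists_length_le, simp add: X_def)
  moreover have "sorted_list_of_set X @ ys \<in> S"
    using assms(1) by (auto simp: S_def X_def elim_seq_def free_sumvars)
  ultimately have "Min (induced_width X (hedges \<theta>) ` S) \<in> induced_width X (hedges \<theta>) ` S"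
    by (intro Min_in) auto
  moreover have "conj_tw ys \<theta> = Min (induced_width X (hedges \<theta>) ` S)"
    unfolding conj_tw_def X_def S_def by (simp add: image_Collect)
  ultimately show ?thesis
    using that assms(2) by (auto simp: S_def X_def)
qed

lemma induced_width_le_elim:
  assumes "induced_width X E \<sigma> \<le> int k" and "w \<in> set (elim X E (rev (drop (card X) \<sigma>)))"
  shows "card X + w \<le> k + 1"
proof -
  let ?ws = "elim X E (rev (drop (card X) \<sigma>))"
  have "?ws \<noteq> []"
    using assms(2) by auto
  then have "int (card X) + int (Max (set ?ws)) - 1 \<le> int k"
    using assms(1) by (simp add: induced_width_def Let_def)
  moreover have "w \<le> Max (set ?ws)"
    using assms(2) by simp
  ultimately show ?thesis by linarith
qed

type_synonym pexpr = "nat list expr"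

lemma tl_over_maxargs: "tl_over \<Omega> l \<phi> \<Longrightarrow> \<psi> \<in> set (maxargs \<phi>) \<Longrightarrow> tl_over \<Omega> l \<psi>"
  by (induction \<phi>) (auto simp: list_all_iff)

fun app_at :: "'r expr \<Rightarrow> nat list \<Rightarrow> 'r expr option" where
  "app_at (App f as) [] = Some (App f as)"
| "app_at (Mul a b) (i # p) = (if i = 0 then app_at a p else app_at b p)"
| "app_at (Add a b) (i # p) = (if i = 0 then app_at a p else app_at b p)"
| "app_at (Scale c a) (i # p) = app_at a p"
| "app_at (Sum x a) (i # p) = app_at a p"
| "app_at _ _ = None"

lemma app_at_maxargs:
  "app_at \<phi> p = Some (App f as) \<Longrightarrow> tl_over \<Omega> l \<phi> \<Longrightarrow>
     tl_over \<Omega> l (App f as) \<and> set as \<subseteq> set (maxargs \<phi>)"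
  by (induction \<phi> p rule: app_at.induct) (auto split: if_splits)

definition arg_vars :: "'r expr list \<Rightarrow> nat list" where
  "arg_vars as = sorted_list_of_set (\<Union>(set (map free as)))"

lemma set_arg_vars: "set (arg_vars as) = \<Union>(set (map free as))"
  by (simp add: arg_vars_def)

text \<open>Variables outside xs are sent to the vertex 1.\<close>
definition assign :: "nat list \<Rightarrow> nat list \<Rightarrow> nat \<Rightarrow> nat" where
  "assign xs vals w = (case map_of (zip xs vals) w of None \<Rightarrow> 1 | Some v \<Rightarrow> v)"

lemma assign_map: "w \<in> set xs \<Longrightarrow> assign xs (map g xs) w = g w"
  by (simp add: assign_def map_of_zip_map)

lemma assign_map_comp:
  "length xs = length ys \<Longrightarrow> w \<in> set xs \<Longrightarrow> assign xs (map g ys) w = g (assign xs ys w)"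
  by (induction xs ys rule: list_induct2) (auto simp: assign_def)

lemma eval_comp_assign:
  assumes "length zs = length xs" and "free a \<subseteq> set xs"
  shows "eval n G J (\<nu> \<circ> assign xs (map \<eta> zs)) a = eval n G J (assign xs (map (\<nu> \<circ> \<eta>) zs)) a"
  using assms assign_map_comp[of xs "map \<eta> zs" _ \<nu>] by (intro eval_cong_free) auto

lemma assign_in: "set ys \<subseteq> A \<Longrightarrow> 1 \<in> A \<Longrightarrow> assign xs ys w \<in> A"
proof (induction xs arbitrary: ys)
  case (Cons x xs)
  then show ?case by (cases ys) (auto simp: assign_def)
qed (simp add: assign_def)

section \<open>Factors and variable elimination\<close>

datatype 'r factor =
  Factor (supp: "nat set") (fval: "graph \<Rightarrow> (nat \<Rightarrow> nat) \<Rightarrow> real") (fexpr: "(nat \<Rightarrow> nat) \<Rightarrow> 'r expr")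

definition fvals :: "graph \<Rightarrow> 'r factor list \<Rightarrow> (nat \<Rightarrow> nat) \<Rightarrow> real" where
  "fvals G fs \<beta> = (\<Prod>t\<leftarrow>fs. fval t G \<beta>)"

lemma fvals_partition: "fvals G fs \<beta> = fvals G (filter P fs) \<beta> * fvals G (filter (Not \<circ> P) fs) \<beta>"
  by (induction fs) (auto simp: fvals_def ac_simps)

context
  fixes n :: nat and \<Omega> :: "(nat \<times> (real list \<Rightarrow> real)) set" and l k :: nat
begin

definition in_TL_k1 :: "'r expr \<Rightarrow> bool" where
  "in_TL_k1 e \<longleftrightarrow> tl_over \<Omega> l e \<and> vars e \<subseteq> {1..k+1}"

definition renaming :: "(nat \<Rightarrow> nat) \<Rightarrow> bool" where
  "renaming \<eta> \<longleftrightarrow> (\<forall>z. \<eta> z \<in> {1..k+1})"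

definition computes :: "'r expr \<Rightarrow> (graph \<Rightarrow> (nat \<Rightarrow> nat) \<Rightarrow> real) \<Rightarrow> bool" where
  "computes e g \<longleftrightarrow> in_TL_k1 e \<and>
     (\<forall>G I \<nu>. is_graph n G \<longrightarrow> valuation n \<nu> \<longrightarrow> eval n G I \<nu> e = g G \<nu>)"

lemma computesI:
  "in_TL_k1 e \<Longrightarrow> (\<And>G I \<nu>. is_graph n G \<Longrightarrow> valuation n \<nu> \<Longrightarrow> eval n G I \<nu> e = g G \<nu>) \<Longrightarrow>
     computes e g"
  by (simp add: computes_def)

lemma computes_cong:
  "computes e g \<Longrightarrow> (\<And>G \<nu>. is_graph n G \<Longrightarrow> valuation n \<nu> \<Longrightarrow> g G \<nu> = g' G \<nu>) \<Longrightarrow> computes e g'"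
  unfolding computes_def by (metis surj_pair)

lemma computes_in_TL_k1: "computes e g \<Longrightarrow> in_TL_k1 e"
  by (simp add: computes_def)

lemma computes_eval: "computes e g \<Longrightarrow> is_graph n G \<Longrightarrow> valuation n \<nu> \<Longrightarrow> eval n G I \<nu> e = g G \<nu>"
  unfolding computes_def by blast

text \<open>A factor is a function of the variables in its support, given together with,
  for every renaming \<eta> of variables to x_1..x_{k+1}, an expression of TL_{k+1}
  computing it after renaming.\<close>
definition realizes :: "'r factor \<Rightarrow> bool" where
  "realizes t \<longleftrightarrow> finite (supp t) \<and>
     (\<forall>G \<beta> \<beta>'. (\<forall>z\<in>supp t. \<beta> z = \<beta>' z) \<longrightarrow> fval t G \<beta> = fval t G \<beta>') \<and>
     (\<forall>\<eta>. renaming \<eta> \<longrightarrow> computes (fexpr t \<eta>) (\<lambda>G \<nu>. fval t G (\<nu> \<circ> \<eta>)))"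

lemma realizes_finite: "realizes t \<Longrightarrow> finite (supp t)"
  by (simp add: realizes_def)

lemma realizes_supp_cong:
  "realizes t \<Longrightarrow> (\<And>z. z \<in> supp t \<Longrightarrow> \<beta> z = \<beta>' z) \<Longrightarrow> fval t G \<beta> = fval t G \<beta>'"
  unfolding realizes_def by blast

lemma realizes_computes:
  "realizes t \<Longrightarrow> renaming \<eta> \<Longrightarrow> computes (fexpr t \<eta>) (\<lambda>G \<nu>. fval t G (\<nu> \<circ> \<eta>))"
  by (simp add: realizes_def)

lemma fvals_supp_cong:
  assumes "\<forall>t\<in>set fs. realizes t" and "\<forall>t\<in>set fs. \<forall>z\<in>supp t. \<beta> z = \<beta>' z"
  shows "fvals G fs \<beta> = fvals G fs \<beta>'"
  unfolding fvals_def using assms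
  by (intro arg_cong[where f = prod_list] map_cong refl) (blast intro: realizes_supp_cong)

lemma computes_prod_expr:
  assumes "\<forall>t\<in>set fs. realizes t" and "renaming \<eta>"
  shows "computes (prod_expr (map (\<lambda>t. fexpr t \<eta>) fs)) (\<lambda>G \<nu>. fvals G fs (\<nu> \<circ> \<eta>))"
proof -
  have fs: "computes (fexpr t \<eta>) (\<lambda>G \<nu>. fval t G (\<nu> \<circ> \<eta>))" if "t \<in> set fs" for t
    using assms that by (blast intro: realizes_computes)
  have "vars (prod_expr (map (\<lambda>t. fexpr t \<eta>) fs)) \<subseteq> {1..k+1}"
    using vars_prod_expr[of "map (\<lambda>t. fexpr t \<eta>) fs"] fs by (fastforce simp: computes_def in_TL_k1_def)
  with fs show ?thesis
    by (auto simp: computes_def in_TL_k1_def fvals_def eval_prod_expr comp_def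
        intro!: tl_over_prod_expr arg_cong[where f = prod_list])
qed

lemma computes_lincomb_expr:
  assumes "\<And>c. c \<in> set cs \<Longrightarrow> computes (E c) (g c)"
  shows "computes (lincomb_expr (map (\<lambda>c. (fst c, E c)) cs)) (\<lambda>G \<nu>. \<Sum>c\<leftarrow>cs. fst c * g c G \<nu>)"
proof (rule computesI)
  have "vars (lincomb_expr (map (\<lambda>c. (fst c, E c)) cs)) \<subseteq> {1..k+1}"
    using vars_lincomb_expr[of "map (\<lambda>c. (fst c, E c)) cs"] computes_in_TL_k1[OF assms]
    by (fastforce simp: in_TL_k1_def)
  then show "in_TL_k1 (lincomb_expr (map (\<lambda>c. (fst c, E c)) cs))"
    using computes_in_TL_k1[OF assms] by (auto simp: in_TL_k1_def intro!: tl_over_lincomb_expr)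
next
  fix G I \<nu> assume "is_graph n G" "valuation n \<nu>"
  then show "eval n G I \<nu> (lincomb_expr (map (\<lambda>c. (fst c, E c)) cs)) = (\<Sum>c\<leftarrow>cs. fst c * g c G \<nu>)"
    using computes_eval[OF assms] by (simp add: eval_lincomb_expr comp_def cong: map_cong)
qed

definition fresh :: "(nat \<Rightarrow> nat) \<Rightarrow> nat set \<Rightarrow> nat" where
  "fresh \<eta> A = (LEAST t. t \<in> {1..k+1} \<and> t \<notin> \<eta> ` A)"

lemma fresh_spec:
  assumes "finite A" and "card A \<le> k"
  shows "fresh \<eta> A \<in> {1..k+1}" and "fresh \<eta> A \<notin> \<eta> ` A"
proof -
  have "card (\<eta> ` A) < card {1..k+1}"
    using card_image_le[OF assms(1), of \<eta>] assms(2) by simp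
  then obtain t where "t \<in> {1..k+1} \<and> t \<notin> \<eta> ` A"
    by (metis card_mono finite_imageI assms(1) not_le subsetI)
  then have "fresh \<eta> A \<in> {1..k+1} \<and> fresh \<eta> A \<notin> \<eta> ` A"
    unfolding fresh_def by (rule LeastI)
  then show "fresh \<eta> A \<in> {1..k+1}" and "fresh \<eta> A \<notin> \<eta> ` A" by auto
qed

text \<open>In the expression, v is renamed to a name among x_1..x_{k+1} unused by the other
  variables of the new factor; the width bound guarantees that one exists.\<close>
definition sum_out :: "nat \<Rightarrow> 'r factor list \<Rightarrow> 'r factor" where
  "sum_out v D = (let U = \<Union>(supp ` set D) - {v} in
     Factor U (\<lambda>G \<beta>. \<Sum>u\<in>{1..n}. fvals G D (\<beta>(v := u)))
       (\<lambda>\<eta>. let f = fresh \<eta> U in Sum f (prod_expr (map (\<lambda>t. fexpr t (\<eta>(v := f))) D))))"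

lemma realizes_sum_out:
  assumes D: "\<forall>t\<in>set D. realizes t" and card: "card (\<Union>(supp ` set D) - {v}) \<le> k"
  shows "realizes (sum_out v D)"
proof -
  define U where "U = \<Union>(supp ` set D) - {v}"
  have finU: "finite U" using D realizes_finite unfolding U_def by blast
  have "(\<Sum>u\<in>{1..n}. fvals G D (\<beta>(v := u))) = (\<Sum>u\<in>{1..n}. fvals G D (\<beta>'(v := u)))"
    if "\<forall>z\<in>U. \<beta> z = \<beta>' z" for G \<beta> \<beta>'
    using that D unfolding U_def by (intro sum.cong refl fvals_supp_cong) auto
  moreover have "computes (fexpr (sum_out v D) \<eta>) (\<lambda>G \<nu>. fval (sum_out v D) G (\<nu> \<circ> \<eta>))"
    if \<eta>: "renaming \<eta>" for \<eta>
  proof -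
    define f where "f = fresh \<eta> U"
    have f: "f \<in> {1..k+1}" "f \<notin> \<eta> ` U"
      using fresh_spec[OF finU card[folded U_def]] unfolding f_def by auto
    have \<eta>f: "renaming (\<eta>(v := f))" using \<eta> f by (simp add: renaming_def)
    define P where "P = prod_expr (map (\<lambda>t. fexpr t (\<eta>(v := f))) D)"
    have P: "computes P (\<lambda>G \<nu>. fvals G D (\<nu> \<circ> \<eta>(v := f)))"
      unfolding P_def using computes_prod_expr[OF D \<eta>f] .
    have "eval n G I (\<nu>(f := u)) P = fvals G D ((\<nu> \<circ> \<eta>)(v := u))"
      if "is_graph n G" "valuation n \<nu>" "u \<in> {1..n}" for G I \<nu> u
    proof -
      have "valuation n (\<nu>(f := u))" using that by (simp add: valuation_def)
      with P that have "eval n G I (\<nu>(f := u)) P = fvals G D (\<nu>(f := u) \<circ> \<eta>(v := f))"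
        unfolding computes_def by blast
      also have "\<dots> = fvals G D ((\<nu> \<circ> \<eta>)(v := u))"
        using D f(2) by (intro fvals_supp_cong) (auto simp: U_def)
      finally show ?thesis .
    qed
    with P f show ?thesis
      by (simp add: sum_out_def Let_def U_def [symmetric] f_def [symmetric] P_def [symmetric]
          computes_def in_TL_k1_def)
  qed
  ultimately show ?thesis
    using finU by (simp add: realizes_def sum_out_def Let_def U_def [symmetric])
qed

lemma fvals_sum_out:
  assumes "\<forall>t\<in>set fs. realizes t"
  shows "(\<Sum>u\<in>{1..n}. fvals G fs (\<beta>(v := u))) =
    fvals G (filter (\<lambda>t. v \<notin> supp t) fs @ [sum_out v (filter (\<lambda>t. v \<in> supp t) fs)]) \<beta>"
proof -
  define D where "D = filter (\<lambda>t. v \<in> supp t) fs"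
  define R where "R = filter (\<lambda>t. v \<notin> supp t) fs"
  have "fvals G R (\<beta>(v := u)) = fvals G R \<beta>" for u
    using assms by (intro fvals_supp_cong) (auto simp: R_def)
  then have "fvals G fs (\<beta>(v := u)) = fvals G D (\<beta>(v := u)) * fvals G R \<beta>" for u
    using fvals_partition[of G fs _ "\<lambda>t. v \<in> supp t"] by (simp add: D_def R_def comp_def)
  then have "(\<Sum>u\<in>{1..n}. fvals G fs (\<beta>(v := u))) = (\<Sum>u\<in>{1..n}. fvals G D (\<beta>(v := u))) * fvals G R \<beta>"
    by (simp add: sum_distrib_right)
  also have "\<dots> = fvals G (R @ [sum_out v D]) \<beta>"
    by (simp add: fvals_def sum_out_def Let_def ac_simps)
  finally show ?thesis by (simp only: D_def R_def)
qed

lemma elim_Cons_factors: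
  "elim X (mset (map supp fs)) (v # L) =
     card (\<Union>(supp ` set (filter (\<lambda>t. v \<in> supp t) fs)) - X) #
     elim X (mset (map supp (filter (\<lambda>t. v \<notin> supp t) fs @ [sum_out v (filter (\<lambda>t. v \<in> supp t) fs)]))) L"
proof -
  have D: "filter_mset (\<lambda>F. v \<in> F) (mset (map supp fs)) = mset (map supp (filter (\<lambda>t. v \<in> supp t) fs))"
    by (induction fs) auto
  have "mset (map supp fs) =
      mset (map supp (filter (\<lambda>t. v \<in> supp t) fs)) + mset (map supp (filter (\<lambda>t. v \<notin> supp t) fs))"
    by (induction fs) auto
  then have "mset (map supp fs) - mset (map supp (filter (\<lambda>t. v \<in> supp t) fs)) =
      mset (map supp (filter (\<lambda>t. v \<notin> supp t) fs))"
    by (metis add_diff_cancel_left')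
  with D show ?thesis by (simp add: Let_def sum_out_def)
qed

lemma variable_elimination:
  fixes fs :: "'r factor list"
  assumes "\<forall>t\<in>set fs. realizes t" and "finite X"
    and "\<forall>w\<in>set (elim X (mset (map supp fs)) L). card X + w \<le> k + 1"
  shows "\<exists>fs' :: 'r factor list. (\<forall>t\<in>set fs'. realizes t) \<and>
    (\<forall>G \<beta>. iter_sum n \<beta> (rev L) (fvals G fs) = fvals G fs' \<beta>)"
  using assms(1,3)
proof (induction L arbitrary: fs)
  case (Cons v L)
  define D where "D = filter (\<lambda>t. v \<in> supp t) fs"
  define U where "U = \<Union>(supp ` set D)"
  define fs1 where "fs1 = filter (\<lambda>t. v \<notin> supp t) fs @ [sum_out v D]"
  have elim: "elim X (mset (map supp fs)) (v # L) = card (U - X) # elim X (mset (map supp fs1)) L"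
    unfolding U_def D_def fs1_def by (rule elim_Cons_factors)
  have "card (U - {v}) \<le> k"
  proof (cases "v \<in> U")
    case True
    have "finite U" using Cons.prems(1) realizes_finite by (auto simp: U_def D_def)
    then have "card U \<le> card ((U - X) \<union> X)"
      using assms(2) by (intro card_mono) auto
    also have "\<dots> \<le> card (U - X) + card X"
      by (rule card_Un_le)
    finally have "card U \<le> k + 1"
      using Cons.prems(2) elim by simp
    with True \<open>finite U\<close> show ?thesis by simp
  next
    case False
    then have "U = {}" by (auto simp: U_def D_def)
    then show ?thesis by simp
  qed
  then have "\<forall>t\<in>set fs1. realizes t"
    using Cons.prems(1) realizes_sum_out[of D v] by (auto simp: fs1_def D_def U_def)
  moreover have "\<forall>w\<in>set (elim X (mset (map supp fs1)) L). card X + w \<le> k + 1"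
    using Cons.prems(2) elim by simp
  ultimately obtain fs' :: "'r factor list" where
    "\<forall>t\<in>set fs'. realizes t" "\<forall>G \<beta>. iter_sum n \<beta> (rev L) (fvals G fs1) = fvals G fs' \<beta>"
    using Cons.IH by blast
  moreover have "iter_sum n \<beta> (rev (v # L)) (fvals G fs) = iter_sum n \<beta> (rev L) (fvals G fs1)" for G \<beta>
    using fvals_sum_out[OF Cons.prems(1)] by (simp add: iter_sum_append fs1_def D_def)
  ultimately show ?case by auto
qed force

lemma computes_iter_sum:
  fixes fs :: "'r factor list"
  assumes "\<forall>t\<in>set fs. realizes t" and "finite X" and "X \<inter> set ys = {}" and "distinct ys"
    and "elim_seq X (set ys) \<sigma>" and "induced_width X (mset (map supp fs)) \<sigma> \<le> int k"
    and "renaming \<rho>"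
  shows "\<exists>e :: 'r expr. computes e (\<lambda>G \<nu>. iter_sum n (\<nu> \<circ> \<rho>) ys (fvals G fs))"
proof -
  define L where "L = rev (drop (card X) \<sigma>)"
  obtain fs' :: "'r factor list" where fs': "\<forall>t\<in>set fs'. realizes t"
    and eq: "\<forall>G \<beta>. iter_sum n \<beta> (rev L) (fvals G fs) = fvals G fs' \<beta>"
    using variable_elimination[OF assms(1,2)] induced_width_le_elim[OF assms(6)]
    unfolding L_def by blast
  have "mset (rev L) = mset ys"
  proof -
    have "distinct \<sigma>" "set \<sigma> = X \<union> set ys" "set (take (card X) \<sigma>) = X"
      using assms(5) by (auto simp: elim_seq_def)
    moreover have "set (take (card X) \<sigma>) \<union> set (drop (card X) \<sigma>) = set \<sigma>"
      by (metis append_take_drop_id set_append)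
    moreover have "set (take (card X) \<sigma>) \<inter> set (drop (card X) \<sigma>) = {}" if "distinct \<sigma>"
      using that by (metis append_take_drop_id distinct_append)
    ultimately have "set (drop (card X) \<sigma>) = set ys" "distinct (drop (card X) \<sigma>)"
      using assms(3) by auto
    then show ?thesis
      using assms(4) by (simp add: L_def set_eq_iff_mset_eq_distinct[symmetric])
  qed
  then have "iter_sum n \<beta> ys (fvals G fs) = fvals G fs' \<beta>" for G \<beta>
    using eq iter_sum_perm by metis
  then show ?thesis
    using computes_prod_expr[OF fs' assms(7)] by auto
qed

text \<open>The interpretation of the fresh relation symbol that nofun introduces for the
  function application at position p: its value on a tuple is the value of
  the application when its free variables, in increasing order, take these values.\<close>
fun app_value :: "graph \<Rightarrow> 'r expr option \<Rightarrow> nat list \<Rightarrow> real" where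
  "app_value G (Some (App f as)) vals =
     (if length vals = length (arg_vars as)
      then eval n G (\<lambda>_ _. 0) (assign (arg_vars as) vals) (App f as) else 0)"
| "app_value G _ vals = 0"

definition app_interp :: "'r expr \<Rightarrow> graph \<Rightarrow> nat list \<Rightarrow> nat list \<Rightarrow> real" where
  "app_interp \<phi> G p vals = app_value G (app_at \<phi> p) vals"

lemma eval_nofun_at:
  "tl_over \<Omega> l \<psi> \<Longrightarrow> (\<forall>p' vals. I (rev p @ p') vals = app_value G (app_at \<psi> p') vals) \<Longrightarrow>
   eval n G I \<nu> (nofun p \<psi>) = eval n G I' \<nu> \<psi>"
proof (induction \<psi> arbitrary: p \<nu>)
  case (App f as)
  have "eval n G I \<nu> (nofun p (App f as)) = I (rev p) (map \<nu> (arg_vars as))"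
    by (simp add: arg_vars_def)
  also have "\<dots> = eval n G (\<lambda>_ _. 0) (assign (arg_vars as) (map \<nu> (arg_vars as))) (App f as)"
    using App.prems(2)[rule_format, of "[]" "map \<nu> (arg_vars as)"] by simp
  also have "\<dots> = eval n G (\<lambda>_ _. 0) \<nu> (App f as)"
    by (rule eval_cong_free) (auto simp: assign_map set_arg_vars)
  also have "\<dots> = eval n G I' \<nu> (App f as)"
    by (rule eval_tl_over_interp_indep[OF App.prems(1)])
  finally show ?case .
next
  case (Mul a b)
  then show ?case by (simp add: Mul.IH)
next
  case (Add a b)
  then show ?case by (simp add: Add.IH)
next
  case (Scale c a)
  then show ?case by (simp add: Scale.IH)
next
  case (Sum x a)
  then show ?case by (simp add: Sum.IH fun_upd_def)
qed simp_all

lemma eval_nofun: "tl_over \<Omega> l \<phi> \<Longrightarrow> eval n G (app_interp \<phi> G) \<nu> (nofun [] \<phi>) = eval n G I \<nu> \<phi>"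
  by (rule eval_nofun_at) (simp_all add: app_interp_def)

text \<open>An atom R_f(zs) of a conjunctive expression, renamed by \<eta>, is replaced by the
  application f itself, each argument translated under the renaming that sends
  the i-th free variable of the arguments to \<eta> (zs ! i).\<close>
definition rel_expr :: "'r expr \<Rightarrow> ('r expr \<Rightarrow> (nat \<Rightarrow> nat) \<Rightarrow> 'r expr) \<Rightarrow> (nat \<Rightarrow> nat) \<Rightarrow>
    nat list \<Rightarrow> nat list \<Rightarrow> 'r expr" where
  "rel_expr \<phi> \<Phi> \<eta> p zs = (case app_at \<phi> p of
      Some (App f as) \<Rightarrow>
        if length zs = length (arg_vars as)
        then App f (map (\<lambda>a. \<Phi> a (assign (arg_vars as) (map \<eta> zs))) as) else zero_expr
    | _ \<Rightarrow> zero_expr)"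

lemma computes_rel_expr:
  assumes "tl_over \<Omega> l \<phi>" and "renaming \<eta>"
    and \<Phi>: "\<And>\<psi> \<rho>. \<psi> \<in> set (maxargs \<phi>) \<Longrightarrow> renaming \<rho> \<Longrightarrow>
       computes (\<Phi> \<psi> \<rho>) (\<lambda>G \<nu>. eval n G (\<lambda>_ _. 0) (\<nu> \<circ> \<rho>) \<psi>)"
  shows "computes (rel_expr \<phi> \<Phi> \<eta> p zs) (\<lambda>G \<nu>. eval n G (app_interp \<phi> G) (\<nu> \<circ> \<eta>) (Rel p zs))"
proof (cases "\<exists>f as. app_at \<phi> p = Some (App f as) \<and> length zs = length (arg_vars as)")
  case True
  then obtain f as where p: "app_at \<phi> p = Some (App f as)" and len: "length zs = length (arg_vars as)"
    by blast
  define \<rho> where "\<rho> = assign (arg_vars as) (map \<eta> zs)"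
  have \<rho>: "renaming \<rho>"
    using \<open>renaming \<eta>\<close> unfolding \<rho>_def renaming_def by (intro allI assign_in) auto
  have app: "tl_over \<Omega> l (App f as)" "set as \<subseteq> set (maxargs \<phi>)"
    using app_at_maxargs[OF p assms(1)] by auto
  have args: "computes (\<Phi> a \<rho>) (\<lambda>G \<nu>. eval n G (\<lambda>_ _. 0) (\<nu> \<circ> \<rho>) a)" if "a \<in> set as" for a
    using \<Phi> app(2) that \<rho> by blast
  have "eval n G I \<nu> (App f (map (\<lambda>a. \<Phi> a \<rho>) as)) = app_interp \<phi> G p (map (\<nu> \<circ> \<eta>) zs)"
    if "is_graph n G" "valuation n \<nu>" for G I \<nu>
  proof -
    have "eval n G I \<nu> (\<Phi> a \<rho>) = eval n G (\<lambda>_ _. 0) (assign (arg_vars as) (map (\<nu> \<circ> \<eta>) zs)) a"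
      if "a \<in> set as" for a
    proof -
      have "eval n G I \<nu> (\<Phi> a \<rho>) = eval n G (\<lambda>_ _. 0) (\<nu> \<circ> \<rho>) a"
        using computes_eval[OF args[OF that]] \<open>is_graph n G\<close> \<open>valuation n \<nu>\<close> by simp
      also have "\<dots> = eval n G (\<lambda>_ _. 0) (assign (arg_vars as) (map (\<nu> \<circ> \<eta>) zs)) a"
        unfolding \<rho>_def using that by (intro eval_comp_assign[OF len]) (auto simp: set_arg_vars)
      finally show ?thesis .
    qed
    then show ?thesis
      using p len by (simp add: app_interp_def cong: map_cong)
  qed
  moreover have "in_TL_k1 (App f (map (\<lambda>a. \<Phi> a \<rho>) as))"
    using app(1) computes_in_TL_k1[OF args] by (fastforce simp: in_TL_k1_def list_all_iff)
  moreover have "rel_expr \<phi> \<Phi> \<eta> p zs = App f (map (\<lambda>a. \<Phi> a \<rho>) as)"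
    using p len by (simp add: rel_expr_def \<rho>_def)
  ultimately show ?thesis
    by (auto intro: computesI)
next
  case False
  then have "rel_expr \<phi> \<Phi> \<eta> p zs = zero_expr"
    by (auto simp: rel_expr_def split: option.splits expr.splits)
  moreover have "app_value G (app_at \<phi> p) vals = 0" if "length vals = length zs" for G vals
    using False that by (cases "app_at \<phi> p"; cases "the (app_at \<phi> p)") auto
  ultimately show ?thesis
    by (simp add: computes_def in_TL_k1_def app_interp_def)
qed

fun atom_expr :: "pexpr \<Rightarrow> (pexpr \<Rightarrow> (nat \<Rightarrow> nat) \<Rightarrow> pexpr) \<Rightarrow> (nat \<Rightarrow> nat) \<Rightarrow> pexpr \<Rightarrow> pexpr"
  where
  "atom_expr \<phi> \<Phi> \<eta> (EqA x y) = EqA (\<eta> x) (\<eta> y)"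
| "atom_expr \<phi> \<Phi> \<eta> (NeqA x y) = NeqA (\<eta> x) (\<eta> y)"
| "atom_expr \<phi> \<Phi> \<eta> (Edge x y) = Edge (\<eta> x) (\<eta> y)"
| "atom_expr \<phi> \<Phi> \<eta> (Col x s) = Col (\<eta> x) s"
| "atom_expr \<phi> \<Phi> \<eta> (Rel p zs) = rel_expr \<phi> \<Phi> \<eta> p zs"
| "atom_expr \<phi> \<Phi> \<eta> _ = zero_expr"

definition atom_factor :: "pexpr \<Rightarrow> (pexpr \<Rightarrow> (nat \<Rightarrow> nat) \<Rightarrow> pexpr) \<Rightarrow> pexpr \<Rightarrow> nat list factor" where
  "atom_factor \<phi> \<Phi> a = Factor (vars a) (\<lambda>G \<beta>. eval n G (app_interp \<phi> G) \<beta> a) (\<lambda>\<eta>. atom_expr \<phi> \<Phi> \<eta> a)"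

lemma realizes_atom_factor:
  fixes \<phi> :: pexpr
  assumes "tl_over \<Omega> l \<phi>"
    and \<Phi>: "\<And>\<psi> \<rho>. \<psi> \<in> set (maxargs \<phi>) \<Longrightarrow> renaming \<rho> \<Longrightarrow>
       computes (\<Phi> \<psi> \<rho>) (\<lambda>G \<nu>. eval n G (\<lambda>_ _. 0) (\<nu> \<circ> \<rho>) \<psi>)"
    and "is_prod l \<theta>" and "a \<in> set (atoms_of \<theta>)"
  shows "realizes (atom_factor \<phi> \<Phi> a)"
proof -
  have "computes (atom_expr \<phi> \<Phi> \<eta> a) (\<lambda>G \<nu>. eval n G (app_interp \<phi> G) (\<nu> \<circ> \<eta>) a)"
    if \<eta>: "renaming \<eta>" for \<eta>
  proof -
    have \<eta>_range: "\<eta> x \<in> {1..k+1}" for x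
      using \<eta> by (simp add: renaming_def)
    from assms(3,4) show ?thesis
    proof (cases rule: atoms_of_prod_cases)
      case (5 p zs)
      then show ?thesis using computes_rel_expr[OF assms(1) \<eta> \<Phi>] by simp
    qed (use \<eta>_range in \<open>auto intro!: computesI simp: in_TL_k1_def\<close>)
  qed
  moreover have "eval n G J \<beta> a = eval n G J \<beta>' a" if "\<forall>z\<in>vars a. \<beta> z = \<beta>' z" for G J \<beta> \<beta>'
    using that free_subset_vars by (blast intro: eval_cong_free)
  ultimately show ?thesis
    by (simp add: realizes_def atom_factor_def)
qed

lemma computes_conj:
  fixes \<phi> :: pexpr and \<Phi> :: "pexpr \<Rightarrow> (nat \<Rightarrow> nat) \<Rightarrow> pexpr"
  assumes "tl_over \<Omega> l \<phi>"
    and \<Phi>: "\<And>\<psi> \<rho>. \<psi> \<in> set (maxargs \<phi>) \<Longrightarrow> renaming \<rho> \<Longrightarrow>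
       computes (\<Phi> \<psi> \<rho>) (\<lambda>G \<nu>. eval n G (\<lambda>_ _. 0) (\<nu> \<circ> \<rho>) \<psi>)"
    and "is_conj l ys \<theta>" and "conj_tw ys \<theta> \<le> int k" and "renaming \<rho>"
  shows "\<exists>e :: pexpr. computes e (\<lambda>G \<nu>. eval n G (app_interp \<phi> G) (\<nu> \<circ> \<rho>) (sumvars ys \<theta>))"
proof -
  define X where "X = free (sumvars ys \<theta>)"
  define fs where "fs = map (atom_factor \<phi> \<Phi>) (atoms_of \<theta>)"
  have ys: "distinct ys" and \<theta>: "is_prod l \<theta>"
    using assms(3) by (auto simp: is_conj_def)
  obtain \<sigma> where \<sigma>: "elim_seq X (set ys) \<sigma>" "induced_width X (mset (map supp fs)) \<sigma> \<le> int k"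
    using conj_tw_le_obtains[OF ys assms(4)]
    by (auto simp: X_def fs_def hedges_def atom_factor_def comp_def)
  have fs: "\<forall>t\<in>set fs. realizes t"
    using realizes_atom_factor[OF assms(1) \<Phi> \<theta>] by (auto simp: fs_def)
  have X: "finite X" "X \<inter> set ys = {}"
    by (auto simp: X_def free_sumvars)
  obtain e :: pexpr where "computes e (\<lambda>G \<nu>. iter_sum n (\<nu> \<circ> \<rho>) ys (fvals G fs))"
    using computes_iter_sum[OF fs X ys \<sigma> assms(5)] by blast
  moreover have "fvals G fs = (\<lambda>\<beta>. eval n G (app_interp \<phi> G) \<beta> \<theta>)" for G
    by (simp add: fun_eq_iff fvals_def fs_def atom_factor_def eval_prod_atoms[OF \<theta>] comp_def)
  ultimately show ?thesis
    by (simp only: eval_sumvars) blast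
qed

lemma computes_cond_a:
  fixes \<phi> :: pexpr and \<Phi> :: "pexpr \<Rightarrow> (nat \<Rightarrow> nat) \<Rightarrow> pexpr"
  assumes "cond_a n l k \<phi>" and "tl_over \<Omega> l \<phi>"
    and \<Phi>: "\<And>\<psi> \<rho>. \<psi> \<in> set (maxargs \<phi>) \<Longrightarrow> renaming \<rho> \<Longrightarrow>
       computes (\<Phi> \<psi> \<rho>) (\<lambda>G \<nu>. eval n G (\<lambda>_ _. 0) (\<nu> \<circ> \<rho>) \<psi>)"
    and "renaming \<rho>"
  shows "\<exists>e :: pexpr. computes e (\<lambda>G \<nu>. eval n G (\<lambda>_ _. 0) (\<nu> \<circ> \<rho>) \<phi>)"
proof -
  obtain cs :: "(real \<times> nat list \<times> pexpr) list" where
    cs: "\<forall>(a, ys, \<theta>) \<in> set cs. is_conj l ys \<theta> \<and> conj_tw ys \<theta> \<le> int k"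
    and nofun: "\<forall>G I \<nu>. is_graph n G \<longrightarrow> valuation n \<nu> \<longrightarrow>
       eval n G I \<nu> (nofun [] \<phi>) = (\<Sum>(a, ys, \<theta>) \<leftarrow> cs. a * eval n G I \<nu> (sumvars ys \<theta>))"
    using assms(1) unfolding cond_a_def by blast
  let ?conj = "\<lambda>c G \<nu>. eval n G (app_interp \<phi> G) (\<nu> \<circ> \<rho>) (sumvars (fst (snd c)) (snd (snd c)))"
  define E :: "real \<times> nat list \<times> pexpr \<Rightarrow> pexpr" where "E c = (SOME e. computes e (?conj c))" for c
  have "computes (E c) (?conj c)" if "c \<in> set cs" for c
  proof -
    have "\<exists>e :: pexpr. computes e (?conj c)"
      using computes_conj[OF assms(2) \<Phi> _ _ assms(4)] cs that by (cases c) auto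
    then show ?thesis
      unfolding E_def by (rule someI_ex)
  qed
  then have "computes (lincomb_expr (map (\<lambda>c. (fst c, E c)) cs)) (\<lambda>G \<nu>. \<Sum>c\<leftarrow>cs. fst c * ?conj c G \<nu>)"
    by (rule computes_lincomb_expr)
  moreover have "(\<Sum>c\<leftarrow>cs. fst c * ?conj c G \<nu>) = eval n G (\<lambda>_ _. 0) (\<nu> \<circ> \<rho>) \<phi>"
    if "is_graph n G" and "valuation n \<nu>" for G \<nu>
  proof -
    have \<nu>\<rho>: "valuation n (\<nu> \<circ> \<rho>)"
      using \<open>valuation n \<nu>\<close> by (simp add: valuation_def)
    have "(\<Sum>(a, ys, \<theta>) \<leftarrow> cs. a * eval n G (app_interp \<phi> G) (\<nu> \<circ> \<rho>) (sumvars ys \<theta>)) =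
        eval n G (app_interp \<phi> G) (\<nu> \<circ> \<rho>) (nofun [] \<phi>)"
      by (rule nofun[rule_format, OF \<open>is_graph n G\<close> \<nu>\<rho>, symmetric])
    then have "(\<Sum>c\<leftarrow>cs. fst c * ?conj c G \<nu>) = eval n G (app_interp \<phi> G) (\<nu> \<circ> \<rho>) (nofun [] \<phi>)"
      by (simp add: case_prod_beta')
    also have "\<dots> = eval n G (\<lambda>_ _. 0) (\<nu> \<circ> \<rho>) \<phi>"
      by (rule eval_nofun[OF assms(2)])
    finally show ?thesis .
  qed
  ultimately show ?thesis
    by (blast intro: computes_cong)
qed

lemma translation_exists:
  fixes \<phi> :: pexpr
  assumes "tw_le n l k \<phi>" and "tl_over \<Omega> l \<phi>" and "renaming \<rho>"
  shows "\<exists>e :: pexpr. computes e (\<lambda>G \<nu>. eval n G (\<lambda>_ _. 0) (\<nu> \<circ> \<rho>) \<phi>)"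
  using assms
proof (induction arbitrary: \<rho> rule: tw_le.induct)
  case (1 \<phi>)
  define \<Phi> :: "pexpr \<Rightarrow> (nat \<Rightarrow> nat) \<Rightarrow> pexpr" where
    "\<Phi> \<psi> \<rho>' = (SOME e. computes e (\<lambda>G \<nu>. eval n G (\<lambda>_ _. 0) (\<nu> \<circ> \<rho>') \<psi>))" for \<psi> \<rho>'
  have "computes (\<Phi> \<psi> \<rho>') (\<lambda>G \<nu>. eval n G (\<lambda>_ _. 0) (\<nu> \<circ> \<rho>') \<psi>)"
    if "\<psi> \<in> set (maxargs \<phi>)" and "renaming \<rho>'" for \<psi> \<rho>'
  proof -
    have "\<exists>e :: pexpr. computes e (\<lambda>G \<nu>. eval n G (\<lambda>_ _. 0) (\<nu> \<circ> \<rho>') \<psi>)"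
      using "1"(2) that tl_over_maxargs[OF "1"(3) that(1)] by blast
    then show ?thesis
      unfolding \<Phi>_def by (rule someI_ex)
  qed
  then show ?case
    by (rule computes_cond_a[OF "1"(1,3) _ "1"(4)])
qed

lemma translation_exists_identity:
  fixes \<phi> :: pexpr
  assumes "tw_le n l k \<phi>" and "tl_over \<Omega> l \<phi>" and "free \<phi> \<subseteq> {1..k+1}"
  obtains e :: pexpr where "in_TL_k1 e"
    and "\<And>G I \<nu>. is_graph n G \<Longrightarrow> valuation n \<nu> \<Longrightarrow> eval n G I \<nu> e = eval n G I \<nu> \<phi>"
proof -
  define \<rho> where "\<rho> z = (if z \<in> {1..k+1} then z else 1)" for z
  have "renaming \<rho>"
    by (simp add: renaming_def \<rho>_def)
  then obtain e :: pexpr where e: "computes e (\<lambda>G \<nu>. eval n G (\<lambda>_ _. 0) (\<nu> \<circ> \<rho>) \<phi>)"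
    using translation_exists[OF assms(1,2)] by blast
  have "eval n G (\<lambda>_ _. 0) (\<nu> \<circ> \<rho>) \<phi> = eval n G I \<nu> \<phi>" for G I \<nu>
    using assms(3) eval_tl_over_interp_indep[OF assms(2)]
    by (metis comp_apply eval_cong_free \<rho>_def subsetD)
  then show ?thesis
    using that computes_in_TL_k1[OF e] computes_eval[OF e] by metis
qed

lemma average_out_nonfree:
  fixes \<phi> e :: pexpr
  assumes "n \<ge> 1" and "in_TL_k1 e"
    and same: "\<And>G I \<nu>. is_graph n G \<Longrightarrow> valuation n \<nu> \<Longrightarrow> eval n G I \<nu> e = eval n G I \<nu> \<phi>"
  defines "e' \<equiv> average_out n (sorted_list_of_set ({1..k+1} - free \<phi>)) e"
  shows "in_TL_k1 e'" and "free e' \<subseteq> free \<phi>"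
    and "is_graph n G \<Longrightarrow> valuation n \<nu> \<Longrightarrow> eval n G I \<nu> e' = eval n G I \<nu> \<phi>"
proof -
  have vars_e: "vars e \<subseteq> {1..k+1}"
    using assms(2) by (simp add: in_TL_k1_def)
  show "in_TL_k1 e'"
    using assms(2) vars_average_out[of n "sorted_list_of_set ({1..k+1} - free \<phi>)" e] vars_e
    by (auto simp: e'_def in_TL_k1_def tl_over_average_out)
  show "free e' \<subseteq> free \<phi>"
    using free_subset_vars[of e] vars_e by (auto simp: e'_def free_average_out)
  assume G: "is_graph n G" and \<nu>: "valuation n \<nu>"
  have indep: "eval n G I \<mu> e = eval n G I \<mu>' e"
    if "valuation n \<mu>" "valuation n \<mu>'" "\<forall>z\<in>free \<phi>. \<mu> z = \<mu>' z" for \<mu> \<mu>'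
  proof -
    have "eval n G I \<mu> e = eval n G I \<mu> \<phi>"
      using same G that(1) by blast
    also have "\<dots> = eval n G I \<mu>' \<phi>"
      using that(3) by (rule eval_cong_free)
    also have "\<dots> = eval n G I \<mu>' e"
      using same G that(2) by metis
    finally show ?thesis .
  qed
  have "eval n G I \<nu> e' = eval n G I \<nu> e"
    unfolding e'_def by (rule eval_average_out[OF assms(1) \<nu> _ indep]) auto
  also have "\<dots> = eval n G I \<nu> \<phi>"
    using same G \<nu> by blast
  finally show "eval n G I \<nu> e' = eval n G I \<nu> \<phi>" .
qed

end

theorem proposition2:
  fixes n l k :: nat and \<Omega> :: "(nat \<times> (real list \<Rightarrow> real)) set"
    and \<phi> :: "nat list expr"
  assumes "n \<ge> 1" and "l \<ge> 1"
    and "\<forall>f \<in> \<Omega>. fst f \<ge> 1"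
    and "tl_over \<Omega> l \<phi>"
    and "tw_le n l k \<phi>"
    and "free \<phi> \<subseteq> {1..k+1}"
  shows "\<exists>\<phi>' :: nat list expr. tl_over \<Omega> l \<phi>' \<and> vars \<phi>' \<subseteq> {1..k+1} \<and> free \<phi>' \<subseteq> free \<phi> \<and>
           (\<forall>G I \<nu>. is_graph n G \<longrightarrow> valuation n \<nu> \<longrightarrow> eval n G I \<nu> \<phi>' = eval n G I \<nu> \<phi>)"
proof -
  obtain e :: "nat list expr" where "in_TL_k1 \<Omega> l k e"
    and "\<And>G I \<nu>. is_graph n G \<Longrightarrow> valuation n \<nu> \<Longrightarrow> eval n G I \<nu> e = eval n G I \<nu> \<phi>"
    using translation_exists_identity[OF assms(5,4,6)] by blast
  from average_out_nonfree[OF assms(1) this] show ?thesis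
    unfolding in_TL_k1_def by blast
qed

end
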